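(* Let $\mathbf M=(M,\vee_{\mathbf M},(\sqsubseteq^n_{\mathbf M})_{n\ge1})$ be a multi-argument specialization semilattice, let $M^{<\omega}$ be the set of finite subsets of $M$, and define on $M\times M^{<\omega}$ the relations $\precsim$ and $\sim$ as in the context. Then: (i) $\precsim$ is reflexive and transitive on $M\times M^{<\omega}$, hence $\sim$ is an equivalence relation. (ii) The operation $K[a,\{b_1,\dots,b_h\}]=[a,\{a\vee_{\mathbf M}b_1\vee_{\mathbf M}\dots\vee_{\mathbf M}b_h\}]$ on $\sim$-classes is well defined (here $[\cdot]$ denotes $\sim$-class). (iii) $\sim$ is a congruence of the semilattice $(M,\vee_{\mathbf M})\times(M^{<\omega},\cup)$, so the quotient $\widetilde M=(M\times M^{<\omega})/\!\sim$ inherits a semilattice operation $\vee$, given by $[a,\{b_1,\dots,b_h\}]\vee[c,\{d_1,\dots,d_k\}]=[a\vee_{\mathbf M}c,\{b_1,\dots,b_h,d_1,\dots,d_k\}]$; moreover, with $\le$ the order induced by $\vee$, $[a,\{b_1,\dots,b_h\}]\le[c,\{d_1,\dots,d_k\}]$ if and only if $(a,\{b_1,\dots,b_h\})\precsim(c,\{d_1,\dots,d_k\})$.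
   Context: A multi-argument specialization semilattice is a join semilattice $(M,\vee)$ (order $a\le b$ iff $a\vee b=b$) with, for each $n\ge1$, an $(n+1)$-ary relation $a\sqsubseteq^n b_1,\dots,b_n$ (also written $a\sqsubseteq b_1,\dots,b_n$) such that: (M1) $a\sqsubseteq a$; (M2) $a\sqsubseteq b_1,\dots,b_n$ and $b_1\sqsubseteq c$ imply $a\sqsubseteq c,b_2,\dots,b_n$; (M3) $a\le b$ and $b\sqsubseteq c_1,\dots,c_m$ imply $a\sqsubseteq c_1,\dots,c_m$; (M4) $a\sqsubseteq b_1,\dots,b_n$ implies $a\sqsubseteq b_{\sigma1},\dots,b_{\sigma n}$ for every permutation $\sigma$; (M5) $a\sqsubseteq b_1,\dots,b_n,b_n$ implies $a\sqsubseteq b_1,\dots,b_n$; (M6) $a\sqsubseteq b_1,\dots,b_n$ implies $a\sqsubseteq b_1,\dots,b_n,b_{n+1}$; (M7) $a\sqsubseteq b_1,\dots,b_n$ and $a_1\sqsubseteq b_1,\dots,b_n$ imply $a\vee a_1\sqsubseteq b_1,\dots,b_n$. Define $(a,\{b_1,\dots,b_h\})\precsim(c,\{d_1,\dots,d_k\})$ iff both: (a1) there is $d\in M$ with $d\sqsubseteq_{\mathbf M}d_1,\dots,d_k$ and $a\le_{\mathbf M}c\vee_{\mathbf M}d$ (when $k=0$, i.e. the set $\{d_1,\dots,d_k\}$ is empty, this clause reads simply $a\le_{\mathbf M}c$); and (a2) for every $i\le h$ there is $j\le k$ with $b_i\sqsubseteq^1_{\mathbf M}d_j$. Define $x\sim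 y$ iff $x\precsim y$ and $y\precsim x$. *)

theory Defs
  imports Main "HOL-Library.Multiset"
begin

text \<open>A multi-argument specialization semilattice: the join semilattice is the
type class semilattice_sup (order: a \<le> b iff sup a b = b); the relation
a \<sqsubseteq>^n b1,...,bn is spec a [b1,...,bn] for nonempty lists (n = length).
The value of spec on the empty list is irrelevant and never used.\<close>

definition mss :: "('a::semilattice_sup \<Rightarrow> 'a list \<Rightarrow> bool) \<Rightarrow> bool" where
  "mss spec \<longleftrightarrow>
     (\<forall>a. spec a [a]) \<and>
     (\<forall>a b bs c. spec a (b # bs) \<longrightarrow> spec b [c] \<longrightarrow> spec a (c # bs)) \<and>
     (\<forall>a b cs. cs \<noteq> [] \<longrightarrow> a \<le> b \<longrightarrow> spec b cs \<longrightarrow> spec a cs) \<and>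
     (\<forall>a bs cs. bs \<noteq> [] \<longrightarrow> mset cs = mset bs \<longrightarrow> spec a bs \<longrightarrow> spec a cs) \<and>
     (\<forall>a bs b. spec a (bs @ [b, b]) \<longrightarrow> spec a (bs @ [b])) \<and>
     (\<forall>a bs b. bs \<noteq> [] \<longrightarrow> spec a bs \<longrightarrow> spec a (bs @ [b])) \<and>
     (\<forall>a a1 bs. bs \<noteq> [] \<longrightarrow> spec a bs \<longrightarrow> spec a1 bs \<longrightarrow> spec (sup a a1) bs)"

definition finpairs :: "('a \<times> 'a set) set" where
  "finpairs = {(a, B). finite B}"

definition mss_le :: "('a::semilattice_sup \<Rightarrow> 'a list \<Rightarrow> bool) \<Rightarrow> 'a \<times> 'a set \<Rightarrow> 'a \<times> 'a set \<Rightarrow> bool" where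
  "mss_le spec x y =
     (case x of (a, B) \<Rightarrow> case y of (c, D) \<Rightarrow>
        (if D = {} then a \<le> c
         else (\<exists>d ds. set ds = D \<and> distinct ds \<and> spec d ds \<and> a \<le> sup c d)) \<and>
        (\<forall>b\<in>B. \<exists>d\<in>D. spec b [d]))"

definition mss_sim :: "('a::semilattice_sup \<Rightarrow> 'a list \<Rightarrow> bool) \<Rightarrow> (('a \<times> 'a set) \<times> ('a \<times> 'a set)) set" where
  "mss_sim spec = {(x, y). x \<in> finpairs \<and> y \<in> finpairs \<and> mss_le spec x y \<and> mss_le spec y x}"

definition mss_K :: "'a::semilattice_sup \<times> 'a set \<Rightarrow> 'a \<times> 'a set" where
  "mss_K x = (case x of (a, B) \<Rightarrow> (a, {Finite_Set.fold sup a B}))"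

definition mss_join :: "'a::semilattice_sup \<times> 'a set \<Rightarrow> 'a \<times> 'a set \<Rightarrow> 'a \<times> 'a set" where
  "mss_join x y = (case x of (a, B) \<Rightarrow> case y of (c, D) \<Rightarrow> (sup a c, B \<union> D))"

end

(* The relation a \<sqsubseteq> b1,...,bn depends only on the set {b1,...,bn} (M4-M6), so it
   becomes a relation d \<sqsubseteq> D between elements and finite nonempty sets.  By M2 it is
   transported along refinements D \<rightarrow> F (every element of D specializes to some element of
   F), and by M7 it is closed under joins in d.  These two closure properties give
   reflexivity and transitivity of \<precsim> and its compatibility with the product join.  For K,
   every element of {c} \<union> D lies below t = \<Squnion>({c} \<union> D), so by M3 the set D may be
   replaced by {t}.  Finally x \<precsim> x \<squnion> y always holds, so x \<squnion> y \<sim> y is equivalent to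
   x \<precsim> y. *)
theory Submission
  imports Defs
begin

locale spec_semilattice =
  fixes spec :: "'a::semilattice_sup \<Rightarrow> 'a list \<Rightarrow> bool"
  assumes spec_refl: "spec a [a]"
    and spec_trans_head: "spec a (b # bs) \<Longrightarrow> spec b [c] \<Longrightarrow> spec a (c # bs)"
    and spec_antimono: "cs \<noteq> [] \<Longrightarrow> a \<le> b \<Longrightarrow> spec b cs \<Longrightarrow> spec a cs"
    and spec_perm: "bs \<noteq> [] \<Longrightarrow> mset cs = mset bs \<Longrightarrow> spec a bs \<Longrightarrow> spec a cs"
    and spec_remdup_last: "spec a (bs @ [b, b]) \<Longrightarrow> spec a (bs @ [b])"
    and spec_snoc: "bs \<noteq> [] \<Longrightarrow> spec a bs \<Longrightarrow> spec a (bs @ [b])"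
    and spec_sup: "bs \<noteq> [] \<Longrightarrow> spec a bs \<Longrightarrow> spec a' bs \<Longrightarrow> spec (sup a a') bs"
begin

lemma spec_if_le: "a \<le> b \<Longrightarrow> spec a [b]"
  using spec_antimono spec_refl by blast

lemma spec_trans: "spec a [b] \<Longrightarrow> spec b [c] \<Longrightarrow> spec a [c]"
  using spec_trans_head by blast

lemma spec_append: "bs \<noteq> [] \<Longrightarrow> spec a bs \<Longrightarrow> spec a (bs @ cs)"
proof (induction cs rule: rev_induct)
  case (snoc c cs)
  then have "spec a ((bs @ cs) @ [c])" by (intro spec_snoc) auto
  then show ?case by simp
qed simp

lemma spec_remove_last:
  assumes "spec a (bs @ [b])" and b: "b \<in> set bs"
  shows "spec a bs"
proof -
  from assms(1) have "spec a (remove1 b bs @ [b, b])"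
    by (rule spec_perm[rotated 2]) (simp_all add: b insert_DiffM)
  then have "spec a (remove1 b bs @ [b])" by (rule spec_remdup_last)
  then show ?thesis
    by (rule spec_perm[rotated 2]) (simp_all add: b insert_DiffM)
qed

lemma spec_remove_redundant: "spec a (bs @ cs) \<Longrightarrow> set cs \<subseteq> set bs \<Longrightarrow> spec a bs"
proof (induction cs rule: rev_induct)
  case (snoc c cs)
  then have "spec a ((bs @ cs) @ [c])" by simp
  then have "spec a (bs @ cs)" by (rule spec_remove_last) (use snoc.prems in auto)
  then show ?case using snoc by auto
qed simp

lemma spec_superset:
  assumes "spec a bs" "bs \<noteq> []" "set bs \<subseteq> set cs"
  shows "spec a cs"
proof -
  have "spec a (bs @ cs)" using spec_append assms by blast
  then have "spec a (cs @ bs)" by (rule spec_perm[rotated 2]) (use assms in auto)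
  then show ?thesis using spec_remove_redundant assms(3) by blast
qed

definition refines :: "'a set \<Rightarrow> 'a set \<Rightarrow> bool" where
  "refines B D \<longleftrightarrow> (\<forall>b\<in>B. \<exists>d\<in>D. spec b [d])"

lemma spec_replace_prefix:
  assumes "spec d (bs @ cs)" "refines (set bs) F"
  shows "\<exists>fs. length fs = length bs \<and> set fs \<subseteq> F \<and> spec d (fs @ cs)"
  using assms
proof (induction bs arbitrary: cs)
  case (Cons b bs)
  obtain f where f: "f \<in> F" "spec b [f]" using Cons.prems(2) by (auto simp: refines_def)
  have "spec d (f # bs @ cs)" using spec_trans_head Cons.prems(1) f(2) by simp
  then have "spec d (bs @ f # cs)" by (rule spec_perm[rotated 2]) auto
  then obtain fs where fs: "length fs = length bs" "set fs \<subseteq> F" "spec d (fs @ f # cs)"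
    using Cons.IH Cons.prems(2) by (force simp: refines_def)
  have "spec d ((f # fs) @ cs)" using fs(3) by (rule spec_perm[rotated 2]) auto
  then show ?case using fs f by (intro exI[of _ "f # fs"]) auto
qed simp

definition spec_set :: "'a \<Rightarrow> 'a set \<Rightarrow> bool" where
  "spec_set d D \<longleftrightarrow> (\<exists>ds. ds \<noteq> [] \<and> set ds = D \<and> spec d ds)"

lemma refines_subset: "B \<subseteq> D \<Longrightarrow> refines B D"
  unfolding refines_def using spec_refl by blast

lemma refines_trans: "refines B D \<Longrightarrow> refines D F \<Longrightarrow> refines B F"
  unfolding refines_def using spec_trans by blast

lemma refines_Un: "refines B B' \<Longrightarrow> refines D D' \<Longrightarrow> refines (B \<union> D) (B' \<union> D')"
  unfolding refines_def by blast

lemma spec_set_refines: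
  assumes "spec_set d D" "refines D F" "finite F"
  shows "spec_set d F"
proof -
  obtain ds where ds: "ds \<noteq> []" "set ds = D" "spec d ds"
    using assms(1) spec_set_def by auto
  obtain fs where fs: "length fs = length ds" "set fs \<subseteq> F" "spec d fs"
    using spec_replace_prefix[of d ds "[]" F] ds assms(2) by auto
  obtain fs' where fs': "set fs' = F" using assms(3) finite_list by blast
  have "fs \<noteq> []" using fs(1) ds(1) by auto
  then show ?thesis
    unfolding spec_set_def using spec_superset fs fs' by (metis set_empty subset_empty)
qed

lemma spec_set_mono: "spec_set d D \<Longrightarrow> D \<subseteq> F \<Longrightarrow> finite F \<Longrightarrow> spec_set d F"
  using spec_set_refines refines_subset by blast

lemma spec_set_sup: "spec_set d D \<Longrightarrow> spec_set e D \<Longrightarrow> spec_set (sup d e) D"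
  unfolding spec_set_def by (metis spec_sup spec_superset order_refl)

lemma spec_set_singleton_iff: "spec_set d {t} \<longleftrightarrow> spec d [t]"
  unfolding spec_set_def by (metis empty_set list.set(2) list.distinct(1) order_refl spec_superset)

lemma spec_set_member: "d \<in> D \<Longrightarrow> finite D \<Longrightarrow> spec_set d D"
  using spec_set_mono[of d "{d}" D] spec_refl by (simp add: spec_set_singleton_iff)

lemma spec_set_iff_distinct:
  "D \<noteq> {} \<Longrightarrow> spec_set d D \<longleftrightarrow> (\<exists>ds. set ds = D \<and> distinct ds \<and> spec d ds)"
  unfolding spec_set_def
  by (metis distinct_remdups set_remdups set_empty spec_superset order_refl)

text \<open>Clause (a1) of \<open>\<precsim>\<close>: the disjunct \<open>a \<le> c\<close> covers \<open>k = 0\<close> and is implied by the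
  other one when \<open>D \<noteq> {}\<close>.\<close>
definition dominated :: "'a \<Rightarrow> 'a \<Rightarrow> 'a set \<Rightarrow> bool" where
  "dominated a c D \<longleftrightarrow> a \<le> c \<or> (\<exists>d. spec_set d D \<and> a \<le> sup c d)"

lemma dominated_if_le: "a \<le> c \<Longrightarrow> dominated a c D"
  unfolding dominated_def by blast

lemma dominated_le_sup: "dominated a c D \<Longrightarrow> a' \<le> sup a c \<Longrightarrow> dominated a' c D"
  unfolding dominated_def
  by (metis sup.absorb2 order_trans le_supI sup_ge1)

lemma dominated_le_sup_spec_set:
  assumes "dominated a c D" "spec_set d D" "a' \<le> sup (sup a c) d"
  shows "dominated a' c D"
  using assms(1) unfolding dominated_def
proof
  assume "a \<le> c"
  then show "a' \<le> c \<or> (\<exists>d. spec_set d D \<and> a' \<le> sup c d)"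
    using assms(2,3) by (metis sup.absorb2)
next
  assume "\<exists>f. spec_set f D \<and> a \<le> sup c f"
  then obtain f where "spec_set f D" "a \<le> sup c f" by blast
  moreover have "sup (sup a c) d \<le> sup c (sup f d)"
    using \<open>a \<le> sup c f\<close> by (simp add: le_supI1 le_supI2 order_trans)
  with assms(3) have "a' \<le> sup c (sup f d)" by (rule order_trans)
  ultimately show "a' \<le> c \<or> (\<exists>d. spec_set d D \<and> a' \<le> sup c d)"
    using spec_set_sup assms(2) by blast
qed

lemma dominated_mono_right: "dominated a c D \<Longrightarrow> c \<le> c' \<Longrightarrow> dominated a c' D"
  unfolding dominated_def by (meson order_trans sup.mono order_refl)

lemma dominated_mono_set: "dominated a c D \<Longrightarrow> D \<subseteq> F \<Longrightarrow> finite F \<Longrightarrow> dominated a c F"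
  unfolding dominated_def using spec_set_mono by blast

lemma dominated_trans:
  assumes "dominated a c D" "dominated c e F" "refines D F" "finite F"
  shows "dominated a e F"
  using assms(1) unfolding dominated_def[of a c D]
proof
  assume "a \<le> c"
  then show ?thesis using dominated_le_sup[OF assms(2)] by (simp add: le_supI1)
next
  assume "\<exists>d. spec_set d D \<and> a \<le> sup c d"
  then obtain d where "spec_set d D" "a \<le> sup c d" by blast
  moreover have "a \<le> sup (sup c e) d"
    using \<open>a \<le> sup c d\<close> by (rule order_trans) (simp add: le_supI1 le_supI2)
  ultimately show ?thesis
    using dominated_le_sup_spec_set[OF assms(2) spec_set_refines[OF _ assms(3,4)]] by blast
qed

lemma dominated_sup:
  assumes "dominated a a' U" "dominated c c' U"
  shows "dominated (sup a c) (sup a' c') U"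
proof -
  have c: "dominated c (sup a' c') U" using dominated_mono_right assms(2) by simp
  show ?thesis using assms(1) unfolding dominated_def[of a a' U]
  proof
    assume "a \<le> a'"
    then show ?thesis using dominated_le_sup[OF c] by (simp add: le_supI1 le_supI2)
  next
    assume "\<exists>d. spec_set d U \<and> a \<le> sup a' d"
    then obtain d where "spec_set d U" "a \<le> sup a' d" by blast
    moreover from \<open>a \<le> sup a' d\<close> have "sup a c \<le> sup (sup c (sup a' c')) d"
      by (simp add: le_supI1) (erule order_trans, simp add: le_supI1 le_supI2)
    ultimately show ?thesis using dominated_le_sup_spec_set[OF c] by blast
  qed
qed

lemma spec_if_dominated:
  assumes "dominated a c D" "finite D" "\<forall>x\<in>insert c D. x \<le> t"
  shows "spec a [t]"
  using assms(1) unfolding dominated_def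
proof
  assume "a \<le> c"
  then show ?thesis using assms(3) spec_if_le order_trans by blast
next
  assume "\<exists>d. spec_set d D \<and> a \<le> sup c d"
  then obtain d where d: "spec_set d D" "a \<le> sup c d" by blast
  have "refines D {t}" using assms(3) spec_if_le by (simp add: refines_def)
  then have "spec_set d {t}" using spec_set_refines[OF d(1)] by simp
  then have "spec d [t]" by (simp only: spec_set_singleton_iff)
  then have "spec (sup c d) [t]" using spec_sup spec_if_le assms(3) by simp
  then show ?thesis using spec_antimono d(2) by blast
qed

lemma spec_Sup_fin:
  "finite B \<Longrightarrow> B \<noteq> {} \<Longrightarrow> \<forall>b\<in>B. spec b [t] \<Longrightarrow> spec (Sup_fin B) [t]"
  by (induction B rule: finite_ne_induct) (simp_all add: spec_sup)

lemma mss_le_iff: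
  assumes "finite D"
  shows "mss_le spec (a, B) (c, D) \<longleftrightarrow> dominated a c D \<and> refines B D"
proof -
  have "(if D = {} then a \<le> c
        else \<exists>d ds. set ds = D \<and> distinct ds \<and> spec d ds \<and> a \<le> sup c d)
      \<longleftrightarrow> dominated a c D"
  proof (cases "D = {}")
    case False
    then obtain d0 where "d0 \<in> D" by blast
    then have "a \<le> c \<Longrightarrow> spec_set d0 D \<and> a \<le> sup c d0"
      using spec_set_member assms by (simp add: le_supI1)
    then show ?thesis
      using False spec_set_iff_distinct unfolding dominated_def by auto
  qed (simp add: dominated_def spec_set_def)
  then show ?thesis by (simp add: mss_le_def refines_def)
qed

lemma mss_le_mono: "a \<le> c \<Longrightarrow> B \<subseteq> D \<Longrightarrow> finite D \<Longrightarrow> mss_le spec (a, B) (c, D)"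
  by (simp add: mss_le_iff dominated_if_le refines_subset)

lemma mss_le_trans:
  "finite D \<Longrightarrow> finite F \<Longrightarrow> mss_le spec (a, B) (c, D) \<Longrightarrow> mss_le spec (c, D) (e, F)
    \<Longrightarrow> mss_le spec (a, B) (e, F)"
  by (meson mss_le_iff dominated_trans refines_trans)

lemma mss_le_join:
  assumes "finite B'" "finite D'" "mss_le spec (a, B) (a', B')" "mss_le spec (c, D) (c', D')"
  shows "mss_le spec (sup a c, B \<union> D) (sup a' c', B' \<union> D')"
proof -
  have "dominated a a' (B' \<union> D')" "dominated c c' (B' \<union> D')"
    using assms dominated_mono_set by (auto simp: mss_le_iff)
  then show ?thesis using assms by (simp add: mss_le_iff dominated_sup refines_Un)
qed

lemma mss_K_eq_Sup_fin: "finite B \<Longrightarrow> mss_K (a, B) = (a, {Sup_fin (insert a B)})"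
  by (simp add: mss_K_def Sup_fin.eq_fold)

lemma mss_le_K:
  assumes "finite B" "finite D" "mss_le spec (a, B) (c, D)"
  shows "mss_le spec (mss_K (a, B)) (mss_K (c, D))"
proof -
  define s where "s = Sup_fin (insert a B)"
  define t where "t = Sup_fin (insert c D)"
  have t_ub: "\<forall>x\<in>insert c D. x \<le> t"
    unfolding t_def using assms(2) by (auto intro!: Sup_fin.coboundedI)
  have "spec a [t]"
    using assms(2,3) t_ub by (intro spec_if_dominated) (simp_all add: mss_le_iff)
  moreover have "refines B {t}"
  proof (rule refines_trans)
    show "refines B D" using assms(2,3) by (simp add: mss_le_iff)
    show "refines D {t}" using t_ub spec_if_le by (simp add: refines_def)
  qed
  ultimately have "spec s [t]"
    unfolding s_def using spec_Sup_fin[of "insert a B" t] assms(1) by (simp add: refines_def)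
  moreover have "a \<le> sup c s" unfolding s_def using assms(1) by (simp add: Sup_fin.coboundedI le_supI2)
  ultimately have "dominated a c {t}" and "refines {s} {t}"
    unfolding dominated_def refines_def spec_set_singleton_iff by blast+
  then show ?thesis
    using assms(1,2) by (simp add: mss_K_eq_Sup_fin mss_le_iff flip: s_def t_def)
qed

lemma mss_le_refl: "x \<in> finpairs \<Longrightarrow> mss_le spec x x"
  by (auto simp: finpairs_def mss_le_mono)

lemma finpairs_mss_le_trans:
  "y \<in> finpairs \<Longrightarrow> z \<in> finpairs \<Longrightarrow> mss_le spec x y \<Longrightarrow> mss_le spec y z \<Longrightarrow> mss_le spec x z"
  by (cases x) (auto simp: finpairs_def intro: mss_le_trans)

lemma equiv_mss_sim: "equiv finpairs (mss_sim spec)"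
  by (rule equivI)
    (auto simp: refl_on_def sym_def trans_def mss_sim_def mss_le_refl
      intro: finpairs_mss_le_trans)

lemma mss_K_in_finpairs: "mss_K x \<in> finpairs"
  by (cases x) (simp add: mss_K_def finpairs_def)

lemma mss_sim_K:
  assumes "(x, y) \<in> mss_sim spec"
  shows "(mss_K x, mss_K y) \<in> mss_sim spec"
proof -
  obtain a B c D where "x = (a, B)" "y = (c, D)" "finite B" "finite D"
    using assms by (cases x, cases y) (auto simp: mss_sim_def finpairs_def)
  then show ?thesis
    using assms mss_K_in_finpairs by (auto simp: mss_sim_def intro: mss_le_K)
qed

lemma mss_sim_join:
  "(x, x') \<in> mss_sim spec \<Longrightarrow> (y, y') \<in> mss_sim spec
    \<Longrightarrow> (mss_join x y, mss_join x' y') \<in> mss_sim spec"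
  by (cases x, cases x', cases y, cases y')
    (auto simp: mss_sim_def finpairs_def mss_join_def mss_le_join)

lemma mss_join_in_finpairs: "x \<in> finpairs \<Longrightarrow> y \<in> finpairs \<Longrightarrow> mss_join x y \<in> finpairs"
  by (cases x, cases y) (simp add: mss_join_def finpairs_def)

lemma mss_sim_join_iff:
  assumes "x \<in> finpairs" "y \<in> finpairs"
  shows "(mss_join x y, y) \<in> mss_sim spec \<longleftrightarrow> mss_le spec x y"
proof -
  obtain a B c D where xy: "x = (a, B)" "y = (c, D)" "finite B" "finite D"
    using assms by (cases x, cases y) (auto simp: finpairs_def)
  have xy_fin: "mss_join x y \<in> finpairs" using assms by (rule mss_join_in_finpairs)
  have x_le: "mss_le spec x (mss_join x y)" and y_le: "mss_le spec y (mss_join x y)"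
    using xy by (simp_all add: mss_join_def mss_le_mono)
  show ?thesis
  proof
    assume "(mss_join x y, y) \<in> mss_sim spec"
    then show "mss_le spec x y"
      using finpairs_mss_le_trans[OF xy_fin assms(2) x_le] by (simp add: mss_sim_def)
  next
    assume "mss_le spec x y"
    then have "mss_le spec (mss_join x y) y"
      using mss_le_join[of D D a B c c D c] mss_le_refl assms xy by (simp add: mss_join_def)
    then show "(mss_join x y, y) \<in> mss_sim spec"
      using xy_fin assms(2) y_le by (simp add: mss_sim_def)
  qed
qed

end

lemma spec_semilattice_if_mss: "mss spec \<Longrightarrow> spec_semilattice spec"
  unfolding mss_def by unfold_locales (simp_all only: simp_thms)

theorem lemma4p5:
  fixes spec :: "'a::semilattice_sup \<Rightarrow> 'a list \<Rightarrow> bool"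
  assumes "mss spec"
  shows "(\<forall>x\<in>finpairs. mss_le spec x x)
    \<and> (\<forall>x\<in>finpairs. \<forall>y\<in>finpairs. \<forall>z\<in>finpairs.
          mss_le spec x y \<longrightarrow> mss_le spec y z \<longrightarrow> mss_le spec x z)
    \<and> equiv finpairs (mss_sim spec)
    \<and> (\<forall>x y. (x, y) \<in> mss_sim spec \<longrightarrow> (mss_K x, mss_K y) \<in> mss_sim spec)
    \<and> (\<forall>x x' y y'. (x, x') \<in> mss_sim spec \<longrightarrow> (y, y') \<in> mss_sim spec \<longrightarrow>
          (mss_join x y, mss_join x' y') \<in> mss_sim spec)
    \<and> (\<forall>x\<in>finpairs. \<forall>y\<in>finpairs.
          (mss_join x y, y) \<in> mss_sim spec \<longleftrightarrow> mss_le spec x y)"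
proof -
  interpret spec_semilattice spec using assms by (rule spec_semilattice_if_mss)
  show ?thesis
    by (simp add: mss_le_refl equiv_mss_sim mss_sim_K mss_sim_join mss_sim_join_iff)
      (blast intro: finpairs_mss_le_trans)
qed

end
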